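(* Let $g$ be a Morse isometry of a proper geodesic space $X$ with poles $g^+,g^-$. Then for every point $x\in X$, $g^n(x)\to g^+$ and $g^{-n}(x)\to g^-$ as $n\to+\infty$.
   Context: A Morse gauge is a function $N:[1,\infty)\times[0,\infty)\to[0,\infty)$; a (quasi-)geodesic $\gamma$ is $N$-Morse if every $(\lambda,\epsilon)$-quasi-geodesic with endpoints on $\gamma$ lies in the $N(\lambda,\epsilon)$-neighborhood of $\gamma$. $\partial_M X$ is the set of Morse geodesic rays modulo finite Hausdorff distance; isometries act by $[\alpha]\mapsto[g\circ\alpha]$. With $x_0\in X$ and $x_n=g^n(x_0)$, an isometry $g$ is Morse if there are a Morse gauge $N$ and geodesics $[x_i,x_{i+1}]$ whose bi-infinite concatenation is an $N$-Morse quasi-geodesic. A Morse isometry has exactly two fixed points in $\partial_M X$, its poles $g^+$ and $g^-$ (the endpoints of a Morse bi-infinite geodesic at finite Hausdorff distance from this concatenation, $g^+$ corresponding to the direction $n\to+\infty$ and $g^-$ to $n\to-\infty$). For $y_n\in X$ and $p\in\partial_M X$, $y_n\to p$ means: for a (equivalently any) basepoint $x$, there exist a Morse gauge $N$ and $N$-Morse geodesics $[x,y_n]$ such that every subsequence of $([x,y_n])$ has a further subsequence converging uniformly on compact sets to a geodesic ray $\gamma$ with $\gamma(0)=x$ and $[\gamma]=p$. *)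

theory Defs
  imports "HOL-Analysis.Analysis"
begin

definition proper_space :: "'a::metric_space itself \<Rightarrow> bool" where
  "proper_space _ \<longleftrightarrow> (\<forall>(x::'a) r. compact (cball x r))"

definition geodesic_seg :: "(real \<Rightarrow> 'a::metric_space) \<Rightarrow> 'a \<Rightarrow> 'a \<Rightarrow> bool" where
  "geodesic_seg \<sigma> x y \<longleftrightarrow> \<sigma> 0 = x \<and> \<sigma> (dist x y) = y \<and>
     (\<forall>s\<in>{0..dist x y}. \<forall>t\<in>{0..dist x y}. dist (\<sigma> s) (\<sigma> t) = \<bar>s - t\<bar>)"

definition geodesic_space :: "'a::metric_space itself \<Rightarrow> bool" where
  "geodesic_space _ \<longleftrightarrow> (\<forall>(x::'a) y. \<exists>\<sigma>. geodesic_seg \<sigma> x y)"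

definition geodesic_ray :: "(real \<Rightarrow> 'a::metric_space) \<Rightarrow> bool" where
  "geodesic_ray \<alpha> \<longleftrightarrow> (\<forall>s\<in>{0..}. \<forall>t\<in>{0..}. dist (\<alpha> s) (\<alpha> t) = \<bar>s - t\<bar>)"

definition biinf_geodesic :: "(real \<Rightarrow> 'a::metric_space) \<Rightarrow> bool" where
  "biinf_geodesic c \<longleftrightarrow> (\<forall>s t. dist (c s) (c t) = \<bar>s - t\<bar>)"

definition quasi_geodesic_on :: "real set \<Rightarrow> real \<Rightarrow> real \<Rightarrow> (real \<Rightarrow> 'a::metric_space) \<Rightarrow> bool" where
  "quasi_geodesic_on I lam eps q \<longleftrightarrow> lam \<ge> 1 \<and> eps \<ge> 0 \<and>
     (\<forall>s\<in>I. \<forall>t\<in>I. \<bar>s - t\<bar> / lam - eps \<le> dist (q s) (q t) \<and>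
                    dist (q s) (q t) \<le> lam * \<bar>s - t\<bar> + eps)"

definition fin_hausdorff :: "'a::metric_space set \<Rightarrow> 'a set \<Rightarrow> bool" where
  "fin_hausdorff S T \<longleftrightarrow> (\<exists>C. (\<forall>x\<in>S. infdist x T \<le> C) \<and> (\<forall>y\<in>T. infdist y S \<le> C))"

definition morse_gauge :: "(real \<Rightarrow> real \<Rightarrow> real) \<Rightarrow> bool" where
  "morse_gauge N \<longleftrightarrow> (\<forall>lam eps. N lam eps \<ge> 0)"

definition N_morse_on :: "(real \<Rightarrow> real \<Rightarrow> real) \<Rightarrow> real set \<Rightarrow> (real \<Rightarrow> 'a::metric_space) \<Rightarrow> bool" where
  "N_morse_on N I \<gamma> \<longleftrightarrow> morse_gauge N \<and>
     (\<forall>lam eps (q::real \<Rightarrow> 'a) a b. a \<le> b \<longrightarrow> quasi_geodesic_on {a..b} lam eps q \<longrightarrow>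
        q a \<in> \<gamma> ` I \<longrightarrow> q b \<in> \<gamma> ` I \<longrightarrow>
        (\<forall>t\<in>{a..b}. infdist (q t) (\<gamma> ` I) \<le> N lam eps))"

definition morse_ray :: "(real \<Rightarrow> 'a::metric_space) \<Rightarrow> bool" where
  "morse_ray \<alpha> \<longleftrightarrow> geodesic_ray \<alpha> \<and> (\<exists>N. N_morse_on N {0..} \<alpha>)"

definition morse_class :: "(real \<Rightarrow> 'a::metric_space) \<Rightarrow> (real \<Rightarrow> 'a) set" where
  "morse_class \<alpha> = {\<beta>. morse_ray \<beta> \<and> fin_hausdorff (\<alpha> ` {0..}) (\<beta> ` {0..})}"

definition morse_boundary :: "(real \<Rightarrow> 'a::metric_space) set set" where
  "morse_boundary = {morse_class \<alpha> | \<alpha>. morse_ray \<alpha>}"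

text \<open>Convergence y_n \<rightarrow> p (for every basepoint x): there exist a Morse gauge N
  and N-Morse geodesics [x,y_n] such that every subsequence has a further subsequence
  converging uniformly on compact sets to a geodesic ray gamma with gamma(0) = x and
  [gamma] = p.  A segment is extended constantly beyond its endpoint (t \<mapsto> sigma (min t L)).\<close>
definition converges_to_boundary :: "(nat \<Rightarrow> 'a::metric_space) \<Rightarrow> (real \<Rightarrow> 'a) set \<Rightarrow> bool" where
  "converges_to_boundary y p \<longleftrightarrow> p \<in> morse_boundary \<and>
     (\<forall>x::'a. \<exists>N \<sigma>. (\<forall>n. geodesic_seg (\<sigma> n) x (y n) \<and> N_morse_on N {0..dist x (y n)} (\<sigma> n)) \<and>
        (\<forall>r::nat\<Rightarrow>nat. strict_mono r \<longrightarrow>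
           (\<exists>s::nat\<Rightarrow>nat. strict_mono s \<and> (\<exists>\<gamma>. geodesic_ray \<gamma> \<and> \<gamma> 0 = x \<and> morse_class \<gamma> = p \<and>
              (\<forall>T\<ge>0. \<forall>e>0. \<forall>\<^sub>F k in sequentially. \<forall>t\<in>{0..T}.
                  dist (\<sigma> (r (s k)) (min t (dist x (y (r (s k)))))) (\<gamma> t) < e)))))"

definition isometry :: "('a::metric_space \<Rightarrow> 'a) \<Rightarrow> bool" where
  "isometry g \<longleftrightarrow> bij g \<and> (\<forall>x y. dist (g x) (g y) = dist x y)"

definition gpow :: "('a \<Rightarrow> 'a) \<Rightarrow> int \<Rightarrow> 'a \<Rightarrow> 'a" where
  "gpow g i = (if 0 \<le> i then g ^^ nat i else inv g ^^ nat (- i))"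

text \<open>Concatenation of the segments sigma i : [x_i, x_{i+1}] (each of length
  L = dist x0 (g x0)), parametrised by arc length on the real line.\<close>
definition concat_path :: "('a::metric_space \<Rightarrow> 'a) \<Rightarrow> 'a \<Rightarrow> (int \<Rightarrow> real \<Rightarrow> 'a) \<Rightarrow> real \<Rightarrow> 'a" where
  "concat_path g x0 \<sigma> t =
     (let L = dist x0 (g x0); i = \<lfloor>t / L\<rfloor> in \<sigma> i (t - L * of_int i))"

definition morse_concat :: "('a::metric_space \<Rightarrow> 'a) \<Rightarrow> 'a \<Rightarrow> (int \<Rightarrow> real \<Rightarrow> 'a) \<Rightarrow> (real \<Rightarrow> real \<Rightarrow> real) \<Rightarrow> bool" where
  "morse_concat g x0 \<sigma> N \<longleftrightarrow> 0 < dist x0 (g x0) \<and>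
     (\<forall>i. geodesic_seg (\<sigma> i) (gpow g i x0) (gpow g (i + 1) x0)) \<and>
     (\<exists>lam eps. quasi_geodesic_on UNIV lam eps (concat_path g x0 \<sigma>)) \<and>
     N_morse_on N UNIV (concat_path g x0 \<sigma>)"

definition morse_isometry :: "('a::metric_space \<Rightarrow> 'a) \<Rightarrow> bool" where
  "morse_isometry g \<longleftrightarrow> isometry g \<and> (\<exists>x0 \<sigma> N. morse_concat g x0 \<sigma> N)"

text \<open>Poles: c is a Morse bi-infinite geodesic at finite Hausdorff distance from the
  concatenation, oriented so that c(t), t \<rightarrow> +\<infinity>, follows x_n, n \<rightarrow> +\<infinity>
  (its forward half is at finite Hausdorff distance from the forward half of the
  concatenation).  g^+ is the class of the forward ray t \<mapsto> c t,
  g^- the class of the backward ray t \<mapsto> c (-t).\<close>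
definition pole_data :: "('a::metric_space \<Rightarrow> 'a) \<Rightarrow> (real \<Rightarrow> 'a) \<Rightarrow> bool" where
  "pole_data g c \<longleftrightarrow> (\<exists>x0 \<sigma> N M. morse_concat g x0 \<sigma> N \<and>
     biinf_geodesic c \<and> N_morse_on M UNIV c \<and>
     fin_hausdorff (range c) (range (concat_path g x0 \<sigma>)) \<and>
     fin_hausdorff (c ` {0..}) (concat_path g x0 \<sigma> ` {0..}))"

definition pole_plus :: "('a::metric_space \<Rightarrow> 'a) \<Rightarrow> (real \<Rightarrow> 'a) set \<Rightarrow> bool" where
  "pole_plus g p \<longleftrightarrow> (\<exists>c. pole_data g c \<and> p = morse_class c)"

definition pole_minus :: "('a::metric_space \<Rightarrow> 'a) \<Rightarrow> (real \<Rightarrow> 'a) set \<Rightarrow> bool" where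
  "pole_minus g p \<longleftrightarrow> (\<exists>c. pole_data g c \<and> p = morse_class (\<lambda>t. c (- t)))"

end

theory Submission
  imports Defs "HOL-Library.Diagonal_Subsequence"
begin

text \<open>Let \<open>c\<close> be the Morse geodesic defining the poles. Since the orbit path is a
  quasi-geodesic at finite Hausdorff distance from \<open>c\<close>, the points \<open>g\<^sup>n x\<close> stay within bounded
  distance of \<open>c(t\<^sub>n)\<close> with \<open>t\<^sub>n \<rightarrow> +\<infinity>\<close>, and the points \<open>g\<^sup>-\<^sup>n x\<close> within bounded distance of
  \<open>c(-t\<^sub>n)\<close>, because \<open>c[0,\<infinity>)\<close> is close to the forward half of the orbit path.

  A geodesic from a basepoint to a point near \<open>c(t)\<close>, \<open>t \<ge> 0\<close>, is coarsely the segment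
  \<open>c[0,t]\<close>. Hence these geodesics are uniformly Morse: a quasi-geodesic with endpoints on one of
  them stays near \<open>c\<close>, and it cannot move far beyond the projections of its endpoints, since
  it would then have to come back. By Arzela-Ascoli in the proper space, every subsequence of
  these geodesics has a further subsequence converging to a geodesic ray, which stays near
  \<open>c[0,\<infinity>)\<close> and so represents \<open>g\<^sup>+\<close>. For \<open>g\<^sup>-\<close>, reverse \<open>c\<close>.\<close>

section \<open>Quasi-geodesics with endpoints near a Morse geodesic\<close>

lemma coarse_intermediate_value:
  fixes f :: "real \<Rightarrow> real"
  assumes ab: "a \<le> b" and \<delta>: "\<delta> > 0"
    and jumps: "\<And>s s'. s \<in> {a..b} \<Longrightarrow> s' \<in> {a..b} \<Longrightarrow> \<bar>s - s'\<bar> \<le> \<delta> \<Longrightarrow> \<bar>f s - f s'\<bar> \<le> K"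
    and fa: "f a \<le> v" and fb: "v \<le> f b"
  shows "\<exists>s\<in>{a..b}. \<bar>f s - v\<bar> \<le> K"
proof -
  have K: "K \<ge> 0" using jumps[of a a] ab \<delta> by auto
  define S where "S = {s\<in>{a..b}. f s \<le> v}"
  have aS: "a \<in> S" using ab fa by (auto simp: S_def)
  have bdd: "bdd_above S" unfolding S_def by (rule bdd_aboveI[of _ b]) auto
  define t where "t = Sup S"
  have at: "a \<le> t" unfolding t_def using aS bdd by (rule cSup_upper)
  have tb: "t \<le> b" unfolding t_def using aS by (intro cSup_least) (auto simp: S_def)
  show ?thesis
  proof (cases "f t \<le> v")
    case True
    show ?thesis
    proof (cases "t = b")
      case True
      then show ?thesis using \<open>f t \<le> v\<close> fb K ab by (intro bexI[of _ b]) auto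
    next
      case False
      define s' where "s' = min b (t + \<delta>)"
      have "t < s'" using False tb \<delta> by (auto simp: s'_def)
      then have "s' \<notin> S" unfolding t_def using bdd cSup_upper by force
      moreover have s': "s' \<in> {a..b}" using at \<open>t < s'\<close> by (auto simp: s'_def)
      ultimately have "v < f s'" by (auto simp: S_def)
      moreover have "\<bar>f t - f s'\<bar> \<le> K" using jumps[of t s'] at tb s' \<open>t < s'\<close> \<delta>
        by (auto simp: s'_def)
      ultimately show ?thesis using True at tb by (intro bexI[of _ t]) auto
    qed
  next
    case False
    obtain s where s: "s \<in> S" "t - \<delta> < s"
      using less_cSupD[of S "t - \<delta>"] aS \<delta> by (auto simp: t_def)
    have "s \<le> t" unfolding t_def using s(1) bdd by (rule cSup_upper)
    then have "\<bar>f s - f t\<bar> \<le> K" using jumps[of s t] s at tb by (auto simp: S_def)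
    then show ?thesis using s False by (intro bexI[of _ s]) (auto simp: S_def)
  qed
qed

lemma coarse_intermediate_value_rev:
  fixes f :: "real \<Rightarrow> real"
  assumes "a \<le> b" and "\<delta> > 0"
    and jumps: "\<And>s s'. s \<in> {a..b} \<Longrightarrow> s' \<in> {a..b} \<Longrightarrow> \<bar>s - s'\<bar> \<le> \<delta> \<Longrightarrow> \<bar>f s - f s'\<bar> \<le> K"
    and "v \<le> f a" and "f b \<le> v"
  shows "\<exists>s\<in>{a..b}. \<bar>f s - v\<bar> \<le> K"
  using coarse_intermediate_value[of a b \<delta> "\<lambda>s. - f s" K "- v"] assms
  by (force simp: abs_minus_commute)

lemma dist_triangle_two_stops: "dist x y \<le> dist x z + dist z w + dist w y"
  using dist_triangle[of x y z] dist_triangle[of z y w] by linarith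

lemma infdist_le_nearE:
  assumes "A \<noteq> {}" and "infdist x A \<le> R"
  obtains a where "a \<in> A" and "dist x a \<le> R + 1"
proof -
  have "infdist x A < R + 1" using assms(2) by simp
  then obtain a where "a \<in> A" "dist x a < R + 1"
    using assms(1) by (auto simp: infdist_notempty cINF_less_iff)
  then show ?thesis using that less_imp_le by blast
qed

lemma quasi_geodesic_onD:
  assumes "quasi_geodesic_on I lam eps q" "s \<in> I" "t \<in> I"
  shows "\<bar>s - t\<bar> / lam - eps \<le> dist (q s) (q t)" "dist (q s) (q t) \<le> lam * \<bar>s - t\<bar> + eps"
  using assms by (auto simp: quasi_geodesic_on_def)

lemma geodesic_seg_quasi_geodesic:
  "geodesic_seg \<sigma> x y \<Longrightarrow> quasi_geodesic_on {0..dist x y} 1 0 \<sigma>"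
  unfolding geodesic_seg_def quasi_geodesic_on_def by auto

lemma biinf_geodesic_dist: "biinf_geodesic c \<Longrightarrow> dist (c s) (c t) = \<bar>s - t\<bar>"
  by (simp add: biinf_geodesic_def)

lemma biinf_geodesic_reflect: "biinf_geodesic c \<Longrightarrow> biinf_geodesic (\<lambda>t. c (- t))"
  by (simp add: biinf_geodesic_def abs_minus_commute)

text \<open>The additive \<open>2\<close> comes from clamping, which moves parameters of \<open>[a - 1, b + 1]\<close> by at
  most 1.\<close>
lemma quasi_geodesic_on_extend:
  assumes q: "quasi_geodesic_on {a..b} lam eps q" and ab: "a \<le> b"
    and near: "\<And>s. s \<in> {a-1..b+1} \<Longrightarrow> dist (Q s) (q (max a (min b s))) \<le> K"
  shows "quasi_geodesic_on {a-1..b+1} lam (eps + 2*K + 2) Q"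
proof -
  define cl where "cl s = max a (min b s)" for s
  have lam: "lam \<ge> 1" and eps: "eps \<ge> 0" using q by (auto simp: quasi_geodesic_on_def)
  have K: "K \<ge> 0" using order_trans[OF zero_le_dist near[of a]] ab by simp
  have bounds: "\<bar>s - t\<bar> / lam - (eps + 2*K + 2) \<le> dist (Q s) (Q t) \<and>
      dist (Q s) (Q t) \<le> lam * \<bar>s - t\<bar> + (eps + 2*K + 2)"
    if s: "s \<in> {a-1..b+1}" and t: "t \<in> {a-1..b+1}" for s t
  proof -
    have cl: "cl s \<in> {a..b}" "cl t \<in> {a..b}" using ab by (auto simp: cl_def)
    have shrink: "\<bar>cl s - cl t\<bar> \<le> \<bar>s - t\<bar>" and slack: "\<bar>s - t\<bar> \<le> \<bar>cl s - cl t\<bar> + 2"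
      using s t ab by (auto simp: cl_def abs_le_iff max_def min_def)
    have "\<bar>dist (Q s) (Q t) - dist (q (cl s)) (q (cl t))\<bar> \<le> 2*K"
      using near[OF s] near[OF t] dist_triangle_two_stops[of "Q s" "Q t" "q (cl s)" "q (cl t)"]
        dist_triangle_two_stops[of "q (cl s)" "q (cl t)" "Q s" "Q t"]
      by (simp add: cl_def dist_commute abs_le_iff)
    moreover have "\<bar>s - t\<bar> / lam \<le> \<bar>cl s - cl t\<bar> / lam + 2"
    proof -
      have "\<bar>s - t\<bar> / lam \<le> (\<bar>cl s - cl t\<bar> + 2) / lam"
        using slack lam by (simp add: divide_right_mono)
      also have "\<dots> \<le> \<bar>cl s - cl t\<bar> / lam + 2"
        using lam by (simp add: add_divide_distrib divide_le_eq)
      finally show ?thesis .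
    qed
    moreover have "lam * \<bar>cl s - cl t\<bar> \<le> lam * \<bar>s - t\<bar>"
      using shrink lam by (simp add: mult_left_mono)
    ultimately show ?thesis using quasi_geodesic_onD[OF q cl] by linarith
  qed
  show ?thesis unfolding quasi_geodesic_on_def using bounds lam eps K by auto
qed

lemma N_morse_onD:
  assumes "N_morse_on N I \<gamma>" and "a \<le> b" and "quasi_geodesic_on {a..b} lam eps q"
    and "q a \<in> \<gamma> ` I" and "q b \<in> \<gamma> ` I" and "t \<in> {a..b}"
  shows "infdist (q t) (\<gamma> ` I) \<le> N lam eps"
  using assms unfolding N_morse_on_def by blast

lemma N_morse_on_near_ends:
  assumes M: "N_morse_on M I c" and q: "quasi_geodesic_on {a..b} lam eps q" and ab: "a \<le> b"
    and I: "u \<in> I" "v \<in> I"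
    and du: "dist (q a) (c u) \<le> K" and dv: "dist (q b) (c v) \<le> K"
    and t: "t \<in> {a..b}"
  shows "infdist (q t) (c ` I) \<le> M lam (eps + 2*K + 2)"
proof -
  define Q where "Q s = (if s < a then c u else if b < s then c v else q s)" for s
  have K: "K \<ge> 0" using order_trans[OF zero_le_dist du] .
  have "quasi_geodesic_on {a-1..b+1} lam (eps + 2*K + 2) Q"
    by (rule quasi_geodesic_on_extend[OF q ab])
      (use K du dv ab in \<open>auto simp: Q_def dist_commute max_absorb2\<close>)
  then have "infdist (Q t) (c ` I) \<le> M lam (eps + 2*K + 2)"
    by (rule N_morse_onD[OF M, rotated]) (use ab t I in \<open>auto simp: Q_def\<close>)
  then show ?thesis using t by (simp add: Q_def)
qed

definition overshoot_bound :: "real \<Rightarrow> real \<Rightarrow> real \<Rightarrow> real" where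
  "overshoot_bound lam eps R =
     lam * lam * (2*R + 2*(lam + eps + 2*R) + eps) + eps + R + (lam + eps + 2*R)"

lemma overshoot_bound_ge: "lam \<ge> 1 \<Longrightarrow> eps \<ge> 0 \<Longrightarrow> R \<ge> 0 \<Longrightarrow> R \<le> overshoot_bound lam eps R"
  unfolding overshoot_bound_def by (simp add: add_increasing)

text \<open>If the \<open>R\<close>-close projection \<open>\<phi>\<close> of a quasi-geodesic to a geodesic starts and ends
  below \<open>v\<close> but passes above it at \<open>t\<close>, then by coarse continuity of \<open>\<phi>\<close> there are times
  \<open>t\<^sub>1 \<le> t \<le> t\<^sub>2\<close> projecting near \<open>v\<close>; the quasi-geodesic inequality bounds \<open>t\<^sub>2 - t\<^sub>1\<close>
  and hence the distance from \<open>q t\<close> to \<open>c v\<close>.\<close>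
lemma quasi_geodesic_overshoot:
  assumes c: "biinf_geodesic c"
    and q: "quasi_geodesic_on {a..b} lam eps q" and ab: "a \<le> b"
    and phi: "\<And>s. s \<in> {a..b} \<Longrightarrow> dist (q s) (c (\<phi> s)) \<le> R"
    and va: "\<phi> a \<le> v" and vb: "\<phi> b \<le> v"
    and t: "t \<in> {a..b}" and vt: "v < \<phi> t"
  shows "dist (q t) (c v) \<le> overshoot_bound lam eps R"
proof -
  have lam: "lam \<ge> 1" using q by (simp add: quasi_geodesic_on_def)
  define J where "J = lam + eps + 2*R"
  have jumps: "\<bar>\<phi> s - \<phi> s'\<bar> \<le> J" if "s \<in> {a..b}" "s' \<in> {a..b}" "\<bar>s - s'\<bar> \<le> 1" for s s'
  proof -
    have "\<bar>\<phi> s - \<phi> s'\<bar> \<le> dist (c (\<phi> s)) (q s) + dist (q s) (q s') + dist (q s') (c (\<phi> s'))"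
      using dist_triangle_two_stops[of "c (\<phi> s)" "c (\<phi> s')" "q s" "q s'"]
        biinf_geodesic_dist[OF c, of "\<phi> s" "\<phi> s'"] by simp
    moreover have "lam * \<bar>s - s'\<bar> \<le> lam" using that lam by (simp add: mult_left_le)
    ultimately show ?thesis using phi[OF that(1)] phi[OF that(2)] quasi_geodesic_onD(2)[OF q that(1,2)]
      by (simp add: J_def dist_commute)
  qed
  obtain t1 where t1: "t1 \<in> {a..t}" "\<bar>\<phi> t1 - v\<bar> \<le> J"
    using coarse_intermediate_value[of a t 1 \<phi> J v] t jumps va vt by auto
  obtain t2 where t2: "t2 \<in> {t..b}" "\<bar>\<phi> t2 - v\<bar> \<le> J"
    using coarse_intermediate_value_rev[of t b 1 \<phi> J v] t jumps vb vt by auto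
  have t12: "t1 \<in> {a..b}" "t2 \<in> {a..b}" using t1 t2 t by auto
  have "dist (q t1) (q t2) \<le> dist (q t1) (c (\<phi> t1)) + dist (c (\<phi> t1)) (c (\<phi> t2)) + dist (c (\<phi> t2)) (q t2)"
    by (rule dist_triangle_two_stops)
  also have "\<dots> \<le> 2*R + 2*J"
    using phi[OF t12(1)] phi[OF t12(2)] biinf_geodesic_dist[OF c, of "\<phi> t1" "\<phi> t2"] t1 t2
    by (simp add: dist_commute)
  finally have "(t2 - t1) / lam - eps \<le> 2*R + 2*J"
    using quasi_geodesic_onD(1)[OF q t12] t1 t2 by auto
  then have "t - t1 \<le> lam * (2*R + 2*J + eps)"
    using lam t1 t2 by (simp add: divide_le_eq algebra_simps)
  then have "lam * (t - t1) \<le> lam * (lam * (2*R + 2*J + eps))"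
    using lam by (simp add: mult_left_mono)
  then have "dist (q t) (q t1) \<le> lam * lam * (2*R + 2*J + eps) + eps"
    using quasi_geodesic_onD(2)[OF q t t12(1)] t1 by (simp add: mult.assoc)
  moreover have "dist (q t) (c v) \<le> dist (q t) (q t1) + dist (q t1) (c (\<phi> t1)) + dist (c (\<phi> t1)) (c v)"
    by (rule dist_triangle_two_stops)
  ultimately show ?thesis
    using phi[OF t12(1)] biinf_geodesic_dist[OF c, of "\<phi> t1" v] t1
    unfolding overshoot_bound_def J_def by linarith
qed

lemma quasi_geodesic_near_geodesic_between_ends:
  assumes c: "biinf_geodesic c"
    and q: "quasi_geodesic_on {a..b} lam eps q" and ab: "a \<le> b"
    and phi: "\<And>s. s \<in> {a..b} \<Longrightarrow> dist (q s) (c (\<phi> s)) \<le> R"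
    and t: "t \<in> {a..b}"
  shows "\<exists>w\<in>{min (\<phi> a) (\<phi> b)..max (\<phi> a) (\<phi> b)}. dist (q t) (c w) \<le> overshoot_bound lam eps R"
proof -
  have "lam \<ge> 1" "eps \<ge> 0" using q by (auto simp: quasi_geodesic_on_def)
  moreover have "R \<ge> 0" using order_trans[OF zero_le_dist phi[of a]] ab by simp
  ultimately have R: "R \<le> overshoot_bound lam eps R" by (rule overshoot_bound_ge)
  consider "max (\<phi> a) (\<phi> b) < \<phi> t" | "\<phi> t < min (\<phi> a) (\<phi> b)"
    | "\<phi> t \<in> {min (\<phi> a) (\<phi> b)..max (\<phi> a) (\<phi> b)}"
    unfolding atLeastAtMost_iff by linarith
  then show ?thesis
  proof cases
    case 1
    have "dist (q t) (c (max (\<phi> a) (\<phi> b))) \<le> overshoot_bound lam eps R"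
      by (rule quasi_geodesic_overshoot[OF c q ab phi _ _ t 1]) auto
    then show ?thesis by (intro bexI[of _ "max (\<phi> a) (\<phi> b)"]) auto
  next
    case 2
    have "dist (q t) ((\<lambda>x. c (- x)) (- min (\<phi> a) (\<phi> b))) \<le> overshoot_bound lam eps R"
      by (rule quasi_geodesic_overshoot[OF biinf_geodesic_reflect[OF c] q ab, of "\<lambda>s. - \<phi> s"])
        (use phi t 2 in auto)
    then show ?thesis by (intro bexI[of _ "min (\<phi> a) (\<phi> b)"]) auto
  next
    case 3
    then show ?thesis using phi[OF t] R by (intro bexI[of _ "\<phi> t"]) auto
  qed
qed

text \<open>The \<open>max\<close> only matters for \<open>lam < 1\<close>, where there are no quasi-geodesics.\<close>
definition transfer_gauge :: "(real \<Rightarrow> real \<Rightarrow> real) \<Rightarrow> real \<Rightarrow> real \<Rightarrow> real \<Rightarrow> real \<Rightarrow> real" where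
  "transfer_gauge M K Ks lam eps =
     max 0 (overshoot_bound lam eps (M lam (eps + 2*K + 2) + 1) + M lam (eps + 2*K + 2) + 1 + K + Ks)"

text \<open>A quasi-geodesic with endpoints on \<open>\<gamma>\<close> has endpoints near \<open>c ` J\<close>, so it stays near \<open>c\<close>,
  and by \<open>quasi_geodesic_near_geodesic_between_ends\<close> near the part of \<open>c\<close> between its
  endpoints' projections, which is close to \<open>c ` J\<close> because \<open>J\<close> is an interval.\<close>
lemma N_morse_on_transfer:
  assumes c: "biinf_geodesic c" and M: "N_morse_on M UNIV c" and J: "is_interval J"
    and near: "\<And>s. s \<in> I \<Longrightarrow> \<exists>w\<in>J. dist (\<gamma> s) (c w) \<le> K"
    and shadow: "\<And>w. w \<in> J \<Longrightarrow> infdist (c w) (\<gamma> ` I) \<le> Ks"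
  shows "N_morse_on (transfer_gauge M K Ks) I \<gamma>"
  unfolding N_morse_on_def
proof (intro conjI allI impI ballI)
  show "morse_gauge (transfer_gauge M K Ks)" by (simp add: morse_gauge_def transfer_gauge_def)
  fix lam eps q a b t
  assume ab: "a \<le> b" and q: "quasi_geodesic_on {a..b} lam eps q"
    and qa: "q a \<in> \<gamma> ` I" and qb: "q b \<in> \<gamma> ` I" and t: "t \<in> {a..b}"
  obtain pu where pu: "pu \<in> J" "dist (q a) (c pu) \<le> K" using qa by (auto dest: near)
  obtain pv where pv: "pv \<in> J" "dist (q b) (c pv) \<le> K" using qb by (auto dest: near)
  define R where "R = M lam (eps + 2*K + 2) + 1"
  have "\<exists>w. dist (q s) (c w) \<le> R" if s: "s \<in> {a..b}" for s
  proof -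
    have "infdist (q s) (range c) \<le> M lam (eps + 2*K + 2)"
      using N_morse_on_near_ends[OF M q ab _ _ pu(2) pv(2) s] by simp
    then show ?thesis unfolding R_def by (rule infdist_le_nearE[rotated]) auto
  qed
  then obtain \<phi> where phi: "\<And>s. s \<in> {a..b} \<Longrightarrow> dist (q s) (c (\<phi> s)) \<le> R" by metis
  obtain w where w: "w \<in> {min (\<phi> a) (\<phi> b)..max (\<phi> a) (\<phi> b)}"
    and qw: "dist (q t) (c w) \<le> overshoot_bound lam eps R"
    using quasi_geodesic_near_geodesic_between_ends[OF c q ab phi t] by blast
  have proj: "\<bar>\<phi> s - p\<bar> \<le> R + K" if "s \<in> {a..b}" and "dist (q s) (c p) \<le> K" for s p
  proof -
    have "\<bar>\<phi> s - p\<bar> \<le> dist (c (\<phi> s)) (q s) + dist (q s) (c p)"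
      using dist_triangle[of "c (\<phi> s)" "c p" "q s"] by (simp add: biinf_geodesic_dist[OF c])
    then show ?thesis using phi[OF that(1)] that(2) by (simp add: dist_commute)
  qed
  have "\<bar>\<phi> a - pu\<bar> \<le> R + K" "\<bar>\<phi> b - pv\<bar> \<le> R + K"
    using proj[of a pu] proj[of b pv] pu(2) pv(2) ab by auto
  define w' where "w' = max (min pu pv) (min (max pu pv) w)"
  have "min pu pv \<in> J" "max pu pv \<in> J" using pu(1) pv(1) by (auto simp: min_def max_def)
  moreover have "min pu pv \<le> w'" "w' \<le> max pu pv" unfolding w'_def by linarith+
  ultimately have "w' \<in> J" using J unfolding is_interval_1 by blast
  then have "infdist (c w') (\<gamma> ` I) \<le> Ks" by (rule shadow)
  moreover have "dist (c w) (c w') \<le> R + K"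
    unfolding biinf_geodesic_dist[OF c] w'_def
    using w \<open>\<bar>\<phi> a - pu\<bar> \<le> R + K\<close> \<open>\<bar>\<phi> b - pv\<bar> \<le> R + K\<close> by auto linarith
  ultimately have "infdist (q t) (\<gamma> ` I) \<le> overshoot_bound lam eps R + R + K + Ks"
    using qw infdist_triangle[of "q t" "\<gamma> ` I" "c w'"] dist_triangle[of "q t" "c w'" "c w"] by linarith
  then show "infdist (q t) (\<gamma> ` I) \<le> transfer_gauge M K Ks lam eps"
    unfolding transfer_gauge_def R_def by linarith
qed

lemma morse_ray_of_biinf_geodesic:
  assumes c: "biinf_geodesic c" and M: "N_morse_on M UNIV c"
  shows "morse_ray c"
proof -
  have "N_morse_on (transfer_gauge M 0 0) {0..} c"
    by (rule N_morse_on_transfer[OF c M is_interval_ci]) force+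
  then show ?thesis using c unfolding morse_ray_def geodesic_ray_def biinf_geodesic_def by blast
qed

section \<open>Geodesics ending near a Morse geodesic\<close>

lemma geodesic_shadowed_by_path:
  assumes c: "biinf_geodesic c" and L: "0 \<le> L"
    and lip: "\<And>s s'. s \<in> {0..L} \<Longrightarrow> s' \<in> {0..L} \<Longrightarrow> dist (p s) (p s') \<le> \<bar>s - s'\<bar>"
    and phi: "\<And>s. s \<in> {0..L} \<Longrightarrow> dist (p s) (c (\<phi> s)) \<le> K"
    and w: "w \<in> {\<phi> 0 - E..\<phi> L + E}" and E: "0 \<le> E"
  shows "\<exists>s\<in>{0..L}. dist (c w) (p s) \<le> E + 3*K + 1"
proof -
  have ends: "0 \<in> {0..L}" "L \<in> {0..L}" using L by auto
  have K: "K \<ge> 0" using order_trans[OF zero_le_dist phi[OF ends(1)]] .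
  have close: "dist (c w) (p s) \<le> \<bar>w - \<phi> s\<bar> + K" if "s \<in> {0..L}" for s
    using dist_triangle[of "c w" "p s" "c (\<phi> s)"] phi[OF that]
    by (simp add: biinf_geodesic_dist[OF c] dist_commute)
  consider "w < \<phi> 0" | "\<phi> L < w" | "\<phi> 0 \<le> w" "w \<le> \<phi> L" by linarith
  then show ?thesis
  proof cases
    case 1
    then show ?thesis using close[OF ends(1)] w K by (intro bexI[OF _ ends(1)]) auto
  next
    case 2
    then show ?thesis using close[OF ends(2)] w K by (intro bexI[OF _ ends(2)]) auto
  next
    case 3
    have jumps: "\<bar>\<phi> s - \<phi> s'\<bar> \<le> 1 + 2*K"
      if "s \<in> {0..L}" "s' \<in> {0..L}" "\<bar>s - s'\<bar> \<le> 1" for s s'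
      using dist_triangle_two_stops[of "c (\<phi> s)" "c (\<phi> s')" "p s" "p s'"]
        phi[OF that(1)] phi[OF that(2)] lip[OF that(1,2)] that(3)
      by (simp add: biinf_geodesic_dist[OF c] dist_commute)
    obtain s where s: "s \<in> {0..L}" "\<bar>\<phi> s - w\<bar> \<le> 1 + 2*K"
      using coarse_intermediate_value[of 0 L 1 \<phi> "1 + 2*K" w] L jumps 3 by auto
    then show ?thesis using close[OF s(1)] E by (intro bexI[OF _ s(1)]) (auto simp: abs_minus_commute)
  qed
qed

lemma geodesic_seg_near_geodesic:
  assumes c: "biinf_geodesic c" and M: "N_morse_on M UNIV c"
    and \<sigma>: "geodesic_seg \<sigma> b y" and T: "0 \<le> T"
    and A: "dist b (c 0) \<le> A" and D: "dist y (c T) \<le> D"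
    and s: "s \<in> {0..dist b y}"
  shows "\<exists>w\<in>{0..T}. dist (\<sigma> s) (c w) \<le> A + D + 2 * (M 1 (2 * max A D + 2) + 1)"
proof -
  define L where "L = dist b y"
  define K where "K = M 1 (2 * max A D + 2) + 1"
  have \<sigma>0: "\<sigma> 0 = b" and \<sigma>L: "\<sigma> L = y"
    and \<sigma>d: "\<And>s t. s \<in> {0..L} \<Longrightarrow> t \<in> {0..L} \<Longrightarrow> dist (\<sigma> s) (\<sigma> t) = \<bar>s - t\<bar>"
    using \<sigma> by (auto simp: geodesic_seg_def L_def)
  have L: "0 \<le> L" by (simp add: L_def)
  have "infdist (\<sigma> s) (range c) \<le> M 1 (0 + 2 * max A D + 2)"
    using N_morse_on_near_ends[OF M geodesic_seg_quasi_geodesic[OF \<sigma>], of 0 T "max A D" s]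
      A D s \<sigma>0 \<sigma>L by (simp add: L_def)
  then obtain w where w: "dist (\<sigma> s) (c w) \<le> K"
    by (rule infdist_le_nearE[rotated]) (auto simp: K_def)
  have "\<bar>w - 0\<bar> \<le> A + s + K"
  proof -
    have "dist (c 0) (c w) \<le> dist (c 0) b + dist b (\<sigma> s) + dist (\<sigma> s) (c w)"
      by (rule dist_triangle_two_stops)
    then show ?thesis using A w \<sigma>d[of 0 s] s L \<sigma>0 by (simp add: biinf_geodesic_dist[OF c] dist_commute L_def)
  qed
  moreover have "\<bar>w - T\<bar> \<le> D + (L - s) + K"
  proof -
    have "dist (c w) (c T) \<le> dist (c w) (\<sigma> s) + dist (\<sigma> s) y + dist y (c T)"
      by (rule dist_triangle_two_stops)
    then show ?thesis using D w \<sigma>d[of s L] s L \<sigma>L by (simp add: biinf_geodesic_dist[OF c] dist_commute L_def)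
  qed
  moreover have "L \<le> A + T + D"
  proof -
    have "L \<le> dist b (c 0) + dist (c 0) (c T) + dist (c T) y"
      unfolding L_def by (rule dist_triangle_two_stops)
    then show ?thesis using A D T by (simp add: biinf_geodesic_dist[OF c] dist_commute)
  qed
  ultimately have "\<bar>w - max 0 (min T w)\<bar> \<le> A + D + K" using s T unfolding L_def by auto
  then have "dist (\<sigma> s) (c (max 0 (min T w))) \<le> A + D + 2 * K"
    using w dist_triangle[of "\<sigma> s" "c (max 0 (min T w))" "c w"]
    by (simp add: biinf_geodesic_dist[OF c])
  moreover have "max 0 (min T w) \<in> {0..T}" using T by auto
  ultimately show ?thesis unfolding K_def by blast
qed

lemma geodesic_seg_shadows_geodesic:
  assumes c: "biinf_geodesic c" and \<sigma>: "geodesic_seg \<sigma> b y"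
    and \<phi>: "\<And>s. s \<in> {0..dist b y} \<Longrightarrow> dist (\<sigma> s) (c (\<phi> s)) \<le> K"
    and D: "dist y (c T) \<le> D" and w: "w \<in> {0..T}"
  shows "infdist (c w) (\<sigma> ` {0..dist b y}) \<le> dist b (c 0) + D + 4*K + 1"
proof -
  define A where "A = dist b (c 0)"
  have \<sigma>0: "\<sigma> 0 = b" and \<sigma>L: "\<sigma> (dist b y) = y"
    and lip: "\<And>s t. s \<in> {0..dist b y} \<Longrightarrow> t \<in> {0..dist b y} \<Longrightarrow> dist (\<sigma> s) (\<sigma> t) \<le> \<bar>s - t\<bar>"
    using \<sigma> by (auto simp: geodesic_seg_def)
  have ends: "0 \<in> {0..dist b y}" "dist b y \<in> {0..dist b y}" by auto
  have "\<phi> 0 \<le> A + K"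
    using \<phi>[OF ends(1)] dist_triangle[of "c (\<phi> 0)" "c 0" b]
    by (simp add: biinf_geodesic_dist[OF c] \<sigma>0 A_def dist_commute)
  moreover have "T - \<phi> (dist b y) \<le> D + K"
    using \<phi>[OF ends(2)] dist_triangle[of "c T" "c (\<phi> (dist b y))" y] D
    by (simp add: biinf_geodesic_dist[OF c] \<sigma>L dist_commute)
  moreover have "0 \<le> A" by (simp add: A_def)
  moreover have "0 \<le> D" using order_trans[OF zero_le_dist D] .
  moreover have "0 \<le> K" using order_trans[OF zero_le_dist \<phi>[OF ends(1)]] .
  ultimately have "w \<in> {\<phi> 0 - (A + D + K)..\<phi> (dist b y) + (A + D + K)}" and E: "0 \<le> A + D + K"
    using w by auto
  then obtain s where "s \<in> {0..dist b y}" "dist (c w) (\<sigma> s) \<le> (A + D + K) + 3*K + 1"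
    using geodesic_shadowed_by_path[OF c zero_le_dist lip \<phi>] by blast
  then show ?thesis unfolding A_def by (intro infdist_le2[of "\<sigma> s"]) auto
qed

lemma geodesic_segs_uniformly_morse:
  assumes c: "biinf_geodesic c" and M: "N_morse_on M UNIV c"
  obtains N K where
    "\<And>\<sigma> y T. geodesic_seg \<sigma> b y \<Longrightarrow> 0 \<le> T \<Longrightarrow> dist y (c T) \<le> D \<Longrightarrow>
       N_morse_on N {0..dist b y} \<sigma>"
    "\<And>\<sigma> y T s. geodesic_seg \<sigma> b y \<Longrightarrow> 0 \<le> T \<Longrightarrow> dist y (c T) \<le> D \<Longrightarrow>
       s \<in> {0..dist b y} \<Longrightarrow> infdist (\<sigma> s) (c ` {0..}) \<le> K"
proof -
  define K where "K = dist b (c 0) + D + 2 * (M 1 (2 * max (dist b (c 0)) D + 2) + 1)"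
  have near: "\<exists>w\<in>{0..T}. dist (\<sigma> s) (c w) \<le> K"
    if "geodesic_seg \<sigma> b y" "0 \<le> T" "dist y (c T) \<le> D" "s \<in> {0..dist b y}" for \<sigma> y T s
    unfolding K_def by (rule geodesic_seg_near_geodesic[OF c M that(1,2) _ that(3,4)]) simp
  have "N_morse_on (transfer_gauge M K (dist b (c 0) + D + 4*K + 1)) {0..dist b y} \<sigma>"
    if \<sigma>: "geodesic_seg \<sigma> b y" and T: "0 \<le> T" and D: "dist y (c T) \<le> D" for \<sigma> y T
  proof (rule N_morse_on_transfer[OF c M is_interval_cc])
    show near_\<sigma>: "\<exists>w\<in>{0..T}. dist (\<sigma> s) (c w) \<le> K" if "s \<in> {0..dist b y}" for s
      by (rule near[OF \<sigma> T D that])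
    then obtain \<phi> where "\<And>s. s \<in> {0..dist b y} \<Longrightarrow> dist (\<sigma> s) (c (\<phi> s)) \<le> K" by metis
    then show "infdist (c w) (\<sigma> ` {0..dist b y}) \<le> dist b (c 0) + D + 4*K + 1" if "w \<in> {0..T}" for w
      by (rule geodesic_seg_shadows_geodesic[OF c \<sigma> _ D that])
  qed
  moreover have "infdist (\<sigma> s) (c ` {0..}) \<le> K"
    if "geodesic_seg \<sigma> b y" "0 \<le> T" "dist y (c T) \<le> D" "s \<in> {0..dist b y}" for \<sigma> y T s
    using near[OF that] by (force intro: infdist_le2)
  ultimately show ?thesis using that by blast
qed

section \<open>Rays defining the same boundary point\<close>

lemma infdist_chain:
  assumes AB: "\<And>x. x \<in> A \<Longrightarrow> infdist x B \<le> C1" and BC: "\<And>y. y \<in> B \<Longrightarrow> infdist y C \<le> C2"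
    and B: "B \<noteq> {}" and x: "x \<in> A"
  shows "infdist x C \<le> C1 + C2 + 1"
proof -
  obtain y where "y \<in> B" "dist x y \<le> C1 + 1" using infdist_le_nearE[OF B AB[OF x]] .
  then show ?thesis using BC[of y] infdist_triangle[of x C y] by linarith
qed

lemma fin_hausdorff_sym: "fin_hausdorff A B \<Longrightarrow> fin_hausdorff B A"
  unfolding fin_hausdorff_def by blast

lemma fin_hausdorff_trans:
  assumes "fin_hausdorff A B" and "fin_hausdorff B C" and B: "B \<noteq> {}"
  shows "fin_hausdorff A C"
proof -
  obtain C1 where C1: "\<And>x. x \<in> A \<Longrightarrow> infdist x B \<le> C1" "\<And>y. y \<in> B \<Longrightarrow> infdist y A \<le> C1"
    using assms(1) by (auto simp: fin_hausdorff_def)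
  obtain C2 where C2: "\<And>y. y \<in> B \<Longrightarrow> infdist y C \<le> C2" "\<And>z. z \<in> C \<Longrightarrow> infdist z B \<le> C2"
    using assms(2) by (auto simp: fin_hausdorff_def)
  show ?thesis unfolding fin_hausdorff_def
    using infdist_chain[OF C1(1) C2(1) B] infdist_chain[OF C2(2) C1(2) B]
    by (intro exI[of _ "C1 + C2 + 1"]) (auto simp: add.commute)
qed

lemma morse_class_eq:
  assumes "fin_hausdorff (\<alpha> ` {0..}) (\<beta> ` {0..})"
  shows "morse_class \<alpha> = morse_class \<beta>"
  unfolding morse_class_def
  using fin_hausdorff_trans[OF assms] fin_hausdorff_trans[OF fin_hausdorff_sym[OF assms]] by blast

lemma morse_class_eq_if_ray_near:
  assumes c: "biinf_geodesic c" and \<gamma>: "geodesic_ray \<gamma>"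
    and near: "\<And>t. 0 \<le> t \<Longrightarrow> infdist (\<gamma> t) (c ` {0..}) \<le> K"
  shows "morse_class \<gamma> = morse_class c"
proof -
  define A where "A = dist (\<gamma> 0) (c 0)"
  have K: "0 \<le> K" using order_trans[OF infdist_nonneg near[of 0]] by simp
  have A: "0 \<le> A" by (simp add: A_def)
  have "\<exists>v. 0 \<le> v \<and> dist (\<gamma> t) (c v) \<le> K + 1" if "0 \<le> t" for t
    by (rule infdist_le_nearE[OF _ near[OF that]]) auto
  then obtain \<phi> where \<phi>: "\<And>t. 0 \<le> t \<Longrightarrow> 0 \<le> \<phi> t \<and> dist (\<gamma> t) (c (\<phi> t)) \<le> K + 1" by metis
  have \<gamma>d: "\<And>s t. 0 \<le> s \<Longrightarrow> 0 \<le> t \<Longrightarrow> dist (\<gamma> s) (\<gamma> t) = \<bar>s - t\<bar>"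
    using \<gamma> by (simp add: geodesic_ray_def)
  have shadow: "infdist (c w) (\<gamma> ` {0..}) \<le> (A + K + 1) + 3 * (K + 1) + 1" if w: "0 \<le> w" for w
  proof -
    define S where "S = w + A + K + 1"
    have S: "0 \<le> S" using w K by (simp add: S_def A_def)
    have "S \<le> dist (\<gamma> 0) (c 0) + dist (c 0) (c (\<phi> S)) + dist (c (\<phi> S)) (\<gamma> S)"
      using \<gamma>d[of 0 S] S dist_triangle_two_stops[of "\<gamma> 0" "\<gamma> S" "c 0" "c (\<phi> S)"] by simp
    then have "w \<le> \<phi> S" using \<phi>[OF S] by (simp add: biinf_geodesic_dist[OF c] S_def A_def dist_commute)
    moreover have "\<phi> 0 \<le> A + K + 1"
      using \<phi>[of 0] dist_triangle[of "c (\<phi> 0)" "c 0" "\<gamma> 0"]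
      by (simp add: biinf_geodesic_dist[OF c] A_def dist_commute)
    ultimately have "w \<in> {\<phi> 0 - (A + K + 1)..\<phi> S + (A + K + 1)}" using w K A by simp
    then obtain s where "s \<in> {0..S}" "dist (c w) (\<gamma> s) \<le> (A + K + 1) + 3 * (K + 1) + 1"
      using geodesic_shadowed_by_path[OF c S, of \<gamma> \<phi> "K + 1" w "A + K + 1"] \<gamma>d \<phi> K
      by (force simp: A_def)
    then show ?thesis by (intro infdist_le2[of "\<gamma> s"]) auto
  qed
  have "fin_hausdorff (\<gamma> ` {0..}) (c ` {0..})"
    unfolding fin_hausdorff_def using near shadow
    by (intro exI[of _ "max K ((A + K + 1) + 3 * (K + 1) + 1)"]) (force simp: le_max_iff_disj)
  then show ?thesis by (rule morse_class_eq)
qed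

section \<open>Limits of 1-Lipschitz paths in a proper space\<close>

lemma proper_space_Cauchy_convergent:
  fixes X :: "nat \<Rightarrow> 'a::metric_space"
  assumes p: "proper_space TYPE('a)" and X: "Cauchy X"
  shows "convergent X"
proof -
  obtain x e where "range X \<subseteq> cball x e"
    using Elementary_Metric_Spaces.cauchy_imp_bounded[OF X] by (auto simp: bounded_subset_cball)
  moreover have "complete (cball x e)" using p by (simp add: proper_space_def compact_imp_complete)
  ultimately show ?thesis using X by (auto elim!: completeE simp: convergent_def)
qed

lemma proper_space_diagonal_subsequence:
  fixes f :: "nat \<Rightarrow> nat \<Rightarrow> 'a::metric_space"
  assumes p: "proper_space TYPE('a)" and bounded: "\<And>n k. f n k \<in> cball (b k) (B k)"
  obtains r where "strict_mono r" and "\<And>k. convergent (\<lambda>n. f (r n) k)"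
proof -
  define P where "P k r \<longleftrightarrow> convergent (\<lambda>n. f (r n) k)" for k and r :: "nat \<Rightarrow> nat"
  interpret S: subseqs P
  proof
    fix k and s :: "nat \<Rightarrow> nat"
    have "seq_compact (cball (b k) (B k))"
      using p by (simp add: proper_space_def compact_imp_seq_compact)
    then obtain l r where "strict_mono r" "((\<lambda>n. f (s n) k) \<circ> r) \<longlonglongrightarrow> l"
      using bounded by (metis seq_compactE)
    then show "\<exists>r'. strict_mono r' \<and> P k (s \<circ> r')"
      by (auto simp: P_def convergent_def o_def)
  qed
  have "convergent (\<lambda>n. f (S.diagseq n) k)" for k
  proof -
    have "P k (S.diagseq \<circ> (+) (Suc k))"
    proof (rule S.diagseq_holds)
      fix r s :: "nat \<Rightarrow> nat" and n
      assume "strict_mono r" "P n s"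
      then show "P n (s \<circ> r)"
        using LIMSEQ_subseq_LIMSEQ[of "\<lambda>i. f (s i) n" _ r] by (auto simp: P_def convergent_def o_def)
    qed
    then have "convergent (\<lambda>n. f (S.diagseq (n + Suc k)) k)"
      by (simp add: P_def o_def add.commute)
    then show ?thesis
      unfolding convergent_def using LIMSEQ_offset[of "\<lambda>n. f (S.diagseq n) k" "Suc k"] by blast
  qed
  then show ?thesis using S.subseq_diagseq that by blast
qed

lemma equi_lipschitz_pointwise_convergent:
  fixes f :: "nat \<Rightarrow> real \<Rightarrow> 'a::metric_space"
  assumes p: "proper_space TYPE('a)"
    and lip: "\<And>n s t. 0 \<le> s \<Longrightarrow> 0 \<le> t \<Longrightarrow> dist (f n s) (f n t) \<le> \<bar>s - t\<bar>"
    and dense: "\<And>t e. 0 \<le> t \<Longrightarrow> 0 < e \<Longrightarrow> \<exists>d. 0 \<le> d \<and> \<bar>t - d\<bar> < e \<and> convergent (\<lambda>n. f n d)"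
    and t: "0 \<le> t"
  shows "convergent (\<lambda>n. f n t)"
proof -
  have "Cauchy (\<lambda>n. f n t)"
  proof (rule metric_CauchyI)
    fix e :: real
    assume e: "0 < e"
    obtain d where d: "0 \<le> d" "\<bar>t - d\<bar> < e/3" "convergent (\<lambda>n. f n d)"
      using dense[OF t, of "e/3"] e by auto
    obtain N where N: "\<And>m n. N \<le> m \<Longrightarrow> N \<le> n \<Longrightarrow> dist (f m d) (f n d) < e/3"
      using metric_CauchyD[OF convergent_Cauchy[OF d(3)], of "e/3"] e by auto
    have "dist (f m t) (f n t) < e" if "N \<le> m" "N \<le> n" for m n
    proof -
      have "dist (f m t) (f n t) \<le> dist (f m t) (f m d) + dist (f m d) (f n d) + dist (f n d) (f n t)"
        by (rule dist_triangle_two_stops)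
      moreover have "dist (f m t) (f m d) \<le> \<bar>t - d\<bar>" "dist (f n d) (f n t) \<le> \<bar>t - d\<bar>"
        using lip[OF t d(1), of m] lip[OF d(1) t, of n] by (auto simp: abs_minus_commute)
      ultimately show ?thesis using N[OF that] d(2) by linarith
    qed
    then show "\<exists>M. \<forall>m\<ge>M. \<forall>n\<ge>M. dist (f m t) (f n t) < e" by blast
  qed
  then show ?thesis by (rule proper_space_Cauchy_convergent[OF p])
qed

lemma equi_lipschitz_uniform_convergence:
  fixes f :: "nat \<Rightarrow> real \<Rightarrow> 'a::metric_space"
  assumes lip: "\<And>n s t. 0 \<le> s \<Longrightarrow> 0 \<le> t \<Longrightarrow> dist (f n s) (f n t) \<le> \<bar>s - t\<bar>"
    and lip_lim: "\<And>s t. 0 \<le> s \<Longrightarrow> 0 \<le> t \<Longrightarrow> dist (\<gamma> s) (\<gamma> t) \<le> \<bar>s - t\<bar>"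
    and lim: "\<And>t. 0 \<le> t \<Longrightarrow> (\<lambda>n. f n t) \<longlonglongrightarrow> \<gamma> t" and e: "0 < e"
  shows "\<forall>\<^sub>F n in sequentially. \<forall>t\<in>{0..T}. dist (f n t) (\<gamma> t) < e"
proof -
  obtain G where G: "finite G" "G \<subseteq> {0..T}" "{0..T} \<subseteq> (\<Union>g\<in>G. ball g (e/3))"
    using seq_compact_imp_totally_bounded[OF compact_imp_seq_compact[OF compact_Icc]] e
    by (metis divide_pos_pos zero_less_numeral)
  have "\<forall>\<^sub>F n in sequentially. \<forall>g\<in>G. dist (f n g) (\<gamma> g) < e/3"
  proof (rule eventually_ball_finite[OF G(1)], rule ballI)
    fix g
    assume "g \<in> G"
    then have "(\<lambda>n. f n g) \<longlonglongrightarrow> \<gamma> g" using G(2) lim by auto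
    then show "\<forall>\<^sub>F n in sequentially. dist (f n g) (\<gamma> g) < e/3" by (rule tendstoD) (use e in simp)
  qed
  then show ?thesis
  proof (rule eventually_mono, intro ballI)
    fix n t
    assume n: "\<forall>g\<in>G. dist (f n g) (\<gamma> g) < e/3" and t: "t \<in> {0..T}"
    then obtain g where g: "g \<in> G" "\<bar>t - g\<bar> < e/3"
      using G(3) by (force simp: dist_real_def abs_minus_commute)
    have "0 \<le> g" "0 \<le> t" using g(1) G(2) t by auto
    have "dist (f n t) (\<gamma> t) \<le> dist (f n t) (f n g) + dist (f n g) (\<gamma> g) + dist (\<gamma> g) (\<gamma> t)"
      by (rule dist_triangle_two_stops)
    moreover have "dist (f n t) (f n g) \<le> \<bar>t - g\<bar>" "dist (\<gamma> g) (\<gamma> t) \<le> \<bar>t - g\<bar>"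
      using lip[OF \<open>0 \<le> t\<close> \<open>0 \<le> g\<close>] lip_lim[OF \<open>0 \<le> g\<close> \<open>0 \<le> t\<close>] by (auto simp: abs_minus_commute)
    ultimately show "dist (f n t) (\<gamma> t) < e" using n g by fastforce
  qed
qed

text \<open>Arzela-Ascoli: a diagonal subsequence converges at the nonnegative rationals, hence
  everywhere by equicontinuity and properness.\<close>
lemma equi_lipschitz_subsequence:
  fixes f :: "nat \<Rightarrow> real \<Rightarrow> 'a::metric_space"
  assumes p: "proper_space TYPE('a)"
    and lip: "\<And>n s t. 0 \<le> s \<Longrightarrow> 0 \<le> t \<Longrightarrow> dist (f n s) (f n t) \<le> \<bar>s - t\<bar>"
    and f0: "\<And>n. f n 0 = x"
  obtains r \<gamma> where "strict_mono r" and "\<And>t. 0 \<le> t \<Longrightarrow> (\<lambda>k. f (r k) t) \<longlonglongrightarrow> \<gamma> t"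
    and "\<And>T e. 0 < e \<Longrightarrow> \<forall>\<^sub>F k in sequentially. \<forall>t\<in>{0..T}. dist (f (r k) t) (\<gamma> t) < e"
proof -
  define D where "D = \<rat> \<inter> {0::real..}"
  define d where "d = from_nat_into D"
  have "0 \<in> D" "countable D" by (auto simp: D_def intro: countable_subset[OF _ countable_rat])
  then have d: "range d = D" unfolding d_def by (intro range_from_nat_into) auto
  have "f n (d k) \<in> cball x (d k)" for n k
    using lip[of 0 "d k" n] d by (auto simp: D_def f0 dist_commute)
  then obtain r where r: "strict_mono r" and conv_d: "\<And>k. convergent (\<lambda>n. f (r n) (d k))"
    using proper_space_diagonal_subsequence[OF p, where f="\<lambda>n k. f n (d k)" and b="\<lambda>_. x" and B=d]
    by blast
  have conv: "convergent (\<lambda>n. f (r n) t)" if "0 \<le> t" for t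
  proof (rule equi_lipschitz_pointwise_convergent[OF p lip _ that])
    fix t' e :: real
    assume "0 \<le> t'" "0 < e"
    then obtain q where "q \<in> \<rat>" "t' < q" "q < t' + e"
      using Rats_dense_in_real[of t' "t' + e"] by auto
    moreover from this have "q \<in> range d" using \<open>0 \<le> t'\<close> d by (auto simp: D_def)
    ultimately show "\<exists>q. 0 \<le> q \<and> \<bar>t' - q\<bar> < e \<and> convergent (\<lambda>n. f (r n) q)"
      using \<open>0 \<le> t'\<close> conv_d by (intro exI[of _ q]) auto
  qed
  define \<gamma> where "\<gamma> t = lim (\<lambda>n. f (r n) t)" for t
  have lim: "(\<lambda>n. f (r n) t) \<longlonglongrightarrow> \<gamma> t" if "0 \<le> t" for t
    using conv[OF that] unfolding \<gamma>_def by (simp add: convergent_LIMSEQ_iff)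
  have "dist (\<gamma> s) (\<gamma> t) \<le> \<bar>s - t\<bar>" if "0 \<le> s" "0 \<le> t" for s t
    using tendsto_dist[OF lim[OF that(1)] lim[OF that(2)]] lip[OF that]
    by (intro LIMSEQ_le_const2) auto
  then show ?thesis
    using that[OF r lim] equi_lipschitz_uniform_convergence[of "\<lambda>k. f (r k)" \<gamma>] lip lim by blast
qed

section \<open>Sequences converging to the Morse boundary\<close>

lemma filterlim_at_top_bounded_below:
  fixes w :: "nat \<Rightarrow> real"
  assumes "filterlim w at_top sequentially"
  obtains B where "\<And>n. B \<le> w n"
proof -
  obtain N where N: "\<And>n. N \<le> n \<Longrightarrow> 0 \<le> w n"
    using assms by (auto simp: filterlim_at_top eventually_sequentially)
  have "- (\<Sum>k<N. \<bar>w k\<bar>) \<le> w n" for n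
  proof (cases "n < N")
    case True
    then have "\<bar>w n\<bar> \<le> (\<Sum>k<N. \<bar>w k\<bar>)" by (intro member_le_sum) auto
    then show ?thesis by linarith
  next
    case False
    have "0 \<le> (\<Sum>k<N. \<bar>w k\<bar>)" by (simp add: sum_nonneg)
    moreover have "0 \<le> w n" using N False by simp
    ultimately show ?thesis by linarith
  qed
  then show ?thesis by (rule that)
qed

lemma tracking_nonneg_params:
  assumes c: "biinf_geodesic c" and track: "\<And>n. dist (y n) (c (w n)) \<le> D"
    and w: "filterlim w at_top sequentially"
  obtains D' where "\<And>n. dist (y n) (c (max 0 (w n))) \<le> D'"
proof -
  obtain B where B: "\<And>n. B \<le> w n" using filterlim_at_top_bounded_below[OF w] by blast
  have shift: "dist (c (w n)) (c (max 0 (w n))) \<le> max 0 (- B)" for n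
    unfolding biinf_geodesic_dist[OF c] using B[of n] by linarith
  have "dist (y n) (c (max 0 (w n))) \<le> D + max 0 (- B)" for n
    using track[of n] shift[of n] dist_triangle[of "y n" "c (max 0 (w n))" "c (w n)"] by linarith
  then show ?thesis by (rule that)
qed

lemma geodesic_ray_of_segment_limit:
  assumes \<sigma>: "\<And>k. geodesic_seg (\<sigma> k) x (y k)"
    and long: "filterlim (\<lambda>k. dist x (y k)) at_top sequentially"
    and lim: "\<And>t. 0 \<le> t \<Longrightarrow> (\<lambda>k. \<sigma> k (min t (dist x (y k)))) \<longlonglongrightarrow> \<gamma> t"
  shows "geodesic_ray \<gamma>" and "\<gamma> 0 = x"
proof -
  have "(\<lambda>k. \<sigma> k (min 0 (dist x (y k)))) \<longlonglongrightarrow> x"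
    using \<sigma> by (simp add: geodesic_seg_def)
  moreover have "(\<lambda>k. \<sigma> k (min 0 (dist x (y k)))) \<longlonglongrightarrow> \<gamma> 0" by (rule lim) simp
  ultimately show "\<gamma> 0 = x" using LIMSEQ_unique by blast
  show "geodesic_ray \<gamma>" unfolding geodesic_ray_def
  proof (intro ballI)
    fix s t :: real
    assume "s \<in> {0..}" "t \<in> {0..}"
    then have st: "0 \<le> s" "0 \<le> t" by auto
    have "\<forall>\<^sub>F k in sequentially. max s t \<le> dist x (y k)"
      using long unfolding filterlim_at_top by blast
    then have "\<forall>\<^sub>F k in sequentially.
        dist (\<sigma> k (min s (dist x (y k)))) (\<sigma> k (min t (dist x (y k)))) = \<bar>s - t\<bar>"
      by eventually_elim (use \<sigma> st in \<open>auto simp: geodesic_seg_def\<close>)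
    then have "(\<lambda>k. dist (\<sigma> k (min s (dist x (y k)))) (\<sigma> k (min t (dist x (y k))))) \<longlonglongrightarrow> \<bar>s - t\<bar>"
      by (rule tendsto_eventually)
    moreover have "(\<lambda>k. dist (\<sigma> k (min s (dist x (y k)))) (\<sigma> k (min t (dist x (y k))))) \<longlonglongrightarrow> dist (\<gamma> s) (\<gamma> t)"
      using st by (intro tendsto_dist lim)
    ultimately show "dist (\<gamma> s) (\<gamma> t) = \<bar>s - t\<bar>" using LIMSEQ_unique by blast
  qed
qed

lemma geodesic_segs_subconverge_to_ray:
  fixes c :: "real \<Rightarrow> 'a::metric_space"
  assumes p: "proper_space TYPE('a)" and c: "biinf_geodesic c"
    and \<sigma>: "\<And>k. geodesic_seg (\<sigma> k) x (y k)"
    and long: "filterlim (\<lambda>k. dist x (y k)) at_top sequentially"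
    and near: "\<And>k s. s \<in> {0..dist x (y k)} \<Longrightarrow> infdist (\<sigma> k s) (c ` {0..}) \<le> K"
  shows "\<exists>r. strict_mono r \<and> (\<exists>\<gamma>. geodesic_ray \<gamma> \<and> \<gamma> 0 = x \<and> morse_class \<gamma> = morse_class c \<and>
           (\<forall>T\<ge>0. \<forall>e>0. \<forall>\<^sub>F k in sequentially. \<forall>t\<in>{0..T}.
              dist (\<sigma> (r k) (min t (dist x (y (r k))))) (\<gamma> t) < e))"
proof -
  define f where "f k t = \<sigma> k (min t (dist x (y k)))" for k t
  have lip: "dist (f k s) (f k t) \<le> \<bar>s - t\<bar>" if "0 \<le> s" "0 \<le> t" for k s t
  proof -
    have "min s (dist x (y k)) \<in> {0..dist x (y k)}" "min t (dist x (y k)) \<in> {0..dist x (y k)}"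
      using that by auto
    then have "dist (f k s) (f k t) = \<bar>min s (dist x (y k)) - min t (dist x (y k))\<bar>"
      using \<sigma>[of k] unfolding f_def geodesic_seg_def by blast
    then show ?thesis by linarith
  qed
  have f0: "f k 0 = x" for k
    using \<sigma>[of k] by (simp add: f_def geodesic_seg_def)
  obtain r \<gamma> where r: "strict_mono r"
    and lim: "\<And>t. 0 \<le> t \<Longrightarrow> (\<lambda>k. f (r k) t) \<longlonglongrightarrow> \<gamma> t"
    and unif: "\<And>T e. 0 < e \<Longrightarrow> \<forall>\<^sub>F k in sequentially. \<forall>t\<in>{0..T}. dist (f (r k) t) (\<gamma> t) < e"
    using equi_lipschitz_subsequence[where f = f, OF p lip f0] by blast
  have long_r: "filterlim (\<lambda>k. dist x (y (r k))) at_top sequentially"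
    using filterlim_compose[OF long filterlim_subseq[OF r]] by (simp add: o_def)
  have lim': "(\<lambda>k. \<sigma> (r k) (min t (dist x (y (r k))))) \<longlonglongrightarrow> \<gamma> t" if "0 \<le> t" for t
    using lim[OF that] by (simp add: f_def)
  have \<gamma>: "geodesic_ray \<gamma>" "\<gamma> 0 = x"
    using geodesic_ray_of_segment_limit[of "\<lambda>k. \<sigma> (r k)" x "\<lambda>k. y (r k)", OF \<sigma> long_r lim'] by auto
  have "infdist (\<gamma> t) (c ` {0..}) \<le> K" if "0 \<le> t" for t
  proof (rule LIMSEQ_le_const2)
    show "(\<lambda>k. infdist (f (r k) t) (c ` {0..})) \<longlonglongrightarrow> infdist (\<gamma> t) (c ` {0..})"
      by (intro tendsto_infdist lim that)
    show "\<exists>N. \<forall>k\<ge>N. infdist (f (r k) t) (c ` {0..}) \<le> K"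
      using near that by (auto simp: f_def)
  qed
  then have "morse_class \<gamma> = morse_class c" by (rule morse_class_eq_if_ray_near[OF c \<gamma>(1)])
  then show ?thesis using r \<gamma> unif unfolding f_def by blast
qed

text \<open>The geodesics from a basepoint to the sequence are uniformly Morse and uniformly close to
  the forward ray of \<open>c\<close>, so the limiting rays provided by Arzela-Ascoli represent its class.\<close>
lemma converges_to_boundary_if_tracks_geodesic:
  fixes y :: "nat \<Rightarrow> 'a::metric_space"
  assumes p: "proper_space TYPE('a)" and gs: "geodesic_space TYPE('a)"
    and c: "biinf_geodesic c" and M: "N_morse_on M UNIV c"
    and track: "\<And>n. dist (y n) (c (w n)) \<le> D" and w: "filterlim w at_top sequentially"
  shows "converges_to_boundary y (morse_class c)"
  unfolding converges_to_boundary_def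
proof (intro conjI allI)
  show "morse_class c \<in> morse_boundary"
    using morse_ray_of_biinf_geodesic[OF c M] by (auto simp: morse_boundary_def)
  obtain D' where track': "\<And>n. dist (y n) (c (max 0 (w n))) \<le> D'"
    using tracking_nonneg_params[OF c track w] by blast
  fix x
  have "\<forall>n. \<exists>\<sigma>. geodesic_seg \<sigma> x (y n)" using gs by (simp add: geodesic_space_def)
  then obtain \<sigma> where \<sigma>: "\<And>n. geodesic_seg (\<sigma> n) x (y n)" by metis
  obtain N K where
    N: "\<And>\<sigma>' y' T. geodesic_seg \<sigma>' x y' \<Longrightarrow> 0 \<le> T \<Longrightarrow> dist y' (c T) \<le> D' \<Longrightarrow>
      N_morse_on N {0..dist x y'} \<sigma>'"
    and K: "\<And>\<sigma>' y' T s. geodesic_seg \<sigma>' x y' \<Longrightarrow> 0 \<le> T \<Longrightarrow> dist y' (c T) \<le> D' \<Longrightarrow>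
      s \<in> {0..dist x y'} \<Longrightarrow> infdist (\<sigma>' s) (c ` {0..}) \<le> K"
    using geodesic_segs_uniformly_morse[OF c M, where b = x and D = D'] by blast
  have N\<sigma>: "N_morse_on N {0..dist x (y n)} (\<sigma> n)" for n
    by (rule N[OF \<sigma> _ track']) simp
  have K\<sigma>: "infdist (\<sigma> n s) (c ` {0..}) \<le> K" if "s \<in> {0..dist x (y n)}" for n s
    by (rule K[OF \<sigma> _ track' that]) simp
  have "w n - dist x (c 0) - D' \<le> dist x (y n)" for n
    using dist_triangle_two_stops[of "c 0" "c (max 0 (w n))" x "y n"] track'[of n]
    by (simp add: biinf_geodesic_dist[OF c] dist_commute)
  then have long: "filterlim (\<lambda>n. dist x (y n)) at_top sequentially"
    by (intro filterlim_at_top_mono[OF filterlim_tendsto_add_at_top[OF tendsto_const w,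
          of "- dist x (c 0) - D'"]] always_eventually) (simp add: algebra_simps)
  show "\<exists>N \<sigma>. (\<forall>n. geodesic_seg (\<sigma> n) x (y n) \<and> N_morse_on N {0..dist x (y n)} (\<sigma> n)) \<and>
        (\<forall>r::nat\<Rightarrow>nat. strict_mono r \<longrightarrow>
           (\<exists>s::nat\<Rightarrow>nat. strict_mono s \<and> (\<exists>\<gamma>. geodesic_ray \<gamma> \<and> \<gamma> 0 = x \<and> morse_class \<gamma> = morse_class c \<and>
              (\<forall>T\<ge>0. \<forall>e>0. \<forall>\<^sub>F k in sequentially. \<forall>t\<in>{0..T}.
                  dist (\<sigma> (r (s k)) (min t (dist x (y (r (s k)))))) (\<gamma> t) < e))))"
  proof (intro exI[of _ N] exI[of _ \<sigma>] conjI allI impI)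
    fix r :: "nat \<Rightarrow> nat"
    assume r: "strict_mono r"
    have "filterlim (\<lambda>k. dist x (y (r k))) at_top sequentially"
      using filterlim_compose[OF long filterlim_subseq[OF r]] by (simp add: o_def)
    then show "\<exists>s. strict_mono s \<and> (\<exists>\<gamma>. geodesic_ray \<gamma> \<and> \<gamma> 0 = x \<and> morse_class \<gamma> = morse_class c \<and>
              (\<forall>T\<ge>0. \<forall>e>0. \<forall>\<^sub>F k in sequentially. \<forall>t\<in>{0..T}.
                  dist (\<sigma> (r (s k)) (min t (dist x (y (r (s k)))))) (\<gamma> t) < e))"
      by (rule geodesic_segs_subconverge_to_ray[OF p c \<sigma> _ K\<sigma>])
  qed (use \<sigma> N\<sigma> in simp_all)
qed

section \<open>Orbits of a Morse isometry\<close>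

lemma isometry_funpow_dist: "isometry g \<Longrightarrow> dist ((g ^^ n) a) ((g ^^ n) b) = dist a b"
  by (induction n) (auto simp: isometry_def)

lemma isometry_inv:
  assumes "isometry g"
  shows "isometry (inv g)"
proof -
  have g: "bij g" "\<And>x y. dist (g x) (g y) = dist x y" using assms by (auto simp: isometry_def)
  have "dist (inv g x) (inv g y) = dist x y" for x y
    using g(2)[of "inv g x" "inv g y"] g(1) by (simp add: bij_is_surj surj_f_inv_f)
  then show ?thesis using g(1) by (simp add: isometry_def bij_imp_bij_inv)
qed

lemma gpow_of_nat: "gpow g (int n) = g ^^ n"
  by (simp add: gpow_def)

lemma gpow_neg_of_nat: "gpow g (- int n) = inv g ^^ n"
  by (cases "n = 0") (auto simp: gpow_def)

lemma concat_path_at_multiple: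
  assumes "morse_concat g x0 \<sigma> N"
  shows "concat_path g x0 \<sigma> (dist x0 (g x0) * of_int i) = gpow g i x0"
proof -
  have L: "dist x0 (g x0) > 0" and "geodesic_seg (\<sigma> i) (gpow g i x0) (gpow g (i + 1) x0)"
    using assms by (auto simp: morse_concat_def)
  moreover have "dist x0 (g x0) * of_int i / dist x0 (g x0) = of_int i" using L by simp
  ultimately show ?thesis by (simp add: concat_path_def Let_def geodesic_seg_def)
qed

lemma N_morse_on_reflect:
  assumes "N_morse_on M UNIV c"
  shows "N_morse_on M UNIV (\<lambda>t. c (- t))"
proof -
  have "range (\<lambda>t. c (- t)) = range c" by (metis surj_def minus_minus image_image range_composition)
  then show ?thesis using assms unfolding N_morse_on_def by simp
qed

lemma quasi_geodesic_param_lower_bound: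
  assumes P: "quasi_geodesic_on UNIV lam eps P" and c: "biinf_geodesic c"
    and near: "dist (P s) (c w) \<le> C"
  shows "\<bar>s\<bar> / lam - eps - C - dist (P 0) (c 0) \<le> \<bar>w\<bar>"
proof -
  have "\<bar>s - 0\<bar> / lam - eps \<le> dist (P s) (P 0)" by (rule quasi_geodesic_onD(1)[OF P]) auto
  also have "\<dots> \<le> dist (P s) (c w) + dist (c w) (c 0) + dist (c 0) (P 0)"
    by (rule dist_triangle_two_stops)
  finally show ?thesis using near by (simp add: biinf_geodesic_dist[OF c] dist_commute)
qed

lemma filterlim_at_top_if_linear_lower_bound:
  fixes u :: "nat \<Rightarrow> real"
  assumes a: "0 < a" and bound: "\<forall>\<^sub>F n in sequentially. a * real n - b \<le> u n"
  shows "filterlim u at_top sequentially"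
proof (rule filterlim_at_top_mono)
  have "filterlim (\<lambda>n. a * real n) at_top sequentially"
    using filterlim_tendsto_pos_mult_at_top[OF tendsto_const a filterlim_real_sequentially] .
  then show "filterlim (\<lambda>n. - b + a * real n) at_top sequentially"
    by (rule filterlim_tendsto_add_at_top[OF tendsto_const])
  show "\<forall>\<^sub>F n in sequentially. - b + a * real n \<le> u n" using bound by simp
qed

lemma pole_data_orbit_path:
  assumes "pole_data g c"
  obtains x0 P L lam eps where "biinf_geodesic c" and "quasi_geodesic_on UNIV lam eps P"
    and "0 < L" and "\<And>n. P (L * real n) = (g ^^ n) x0" and "\<And>n. P (- (L * real n)) = (inv g ^^ n) x0"
    and "fin_hausdorff (range c) (range P)" and "fin_hausdorff (c ` {0..}) (P ` {0..})"
proof -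
  obtain x0 \<sigma> N where mc: "morse_concat g x0 \<sigma> N" and c: "biinf_geodesic c"
    and "fin_hausdorff (range c) (range (concat_path g x0 \<sigma>))"
    and "fin_hausdorff (c ` {0..}) (concat_path g x0 \<sigma> ` {0..})"
    using assms unfolding pole_data_def by blast
  moreover obtain lam eps where "quasi_geodesic_on UNIV lam eps (concat_path g x0 \<sigma>)"
    using mc by (auto simp: morse_concat_def)
  moreover have "0 < dist x0 (g x0)" using mc by (simp add: morse_concat_def)
  moreover have "concat_path g x0 \<sigma> (dist x0 (g x0) * real n) = (g ^^ n) x0"
    and "concat_path g x0 \<sigma> (- (dist x0 (g x0) * real n)) = (inv g ^^ n) x0" for n
    using concat_path_at_multiple[OF mc, of "int n"] concat_path_at_multiple[OF mc, of "- int n"]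
    by (simp_all add: gpow_of_nat gpow_neg_of_nat)
  ultimately show ?thesis using that by blast
qed

lemma pole_data_forward_tracking:
  assumes g: "isometry g" and pd: "pole_data g c"
  obtains D w where "filterlim w at_top sequentially" and "\<And>n. dist ((g ^^ n) x) (c (w n)) \<le> D"
proof -
  obtain x0 P L lam eps where c: "biinf_geodesic c" and q: "quasi_geodesic_on UNIV lam eps P"
    and L: "0 < L" and orbit: "\<And>n. P (L * real n) = (g ^^ n) x0"
    and fh: "fin_hausdorff (c ` {0..}) (P ` {0..})"
    using pole_data_orbit_path[OF pd] by metis
  have lam: "0 < lam" using q by (simp add: quasi_geodesic_on_def)
  obtain C where C: "\<And>z. z \<in> P ` {0..} \<Longrightarrow> infdist z (c ` {0..}) \<le> C"
    using fh unfolding fin_hausdorff_def by blast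
  have "\<exists>w\<ge>0. dist ((g ^^ n) x0) (c w) \<le> C + 1" for n
  proof -
    have "P (L * real n) \<in> P ` {0..}" using L by simp
    then have "infdist ((g ^^ n) x0) (c ` {0..}) \<le> C" using C orbit[of n] by metis
    then show ?thesis by (rule infdist_le_nearE[rotated]) auto
  qed
  then obtain w where w: "\<And>n. 0 \<le> w n" and near: "\<And>n. dist ((g ^^ n) x0) (c (w n)) \<le> C + 1"
    by metis
  have "L / lam * real n - (eps + (C + 1) + dist (P 0) (c 0)) \<le> w n" for n
    using quasi_geodesic_param_lower_bound[OF q c, of "L * real n" "w n" "C + 1"] near[of n] w[of n] L
    by (simp add: orbit abs_mult)
  then have "filterlim w at_top sequentially"
    using L lam
    by (intro filterlim_at_top_if_linear_lower_bound[where a = "L / lam"] always_eventually allI) auto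
  moreover have "dist ((g ^^ n) x) (c (w n)) \<le> dist x x0 + (C + 1)" for n
    using dist_triangle[of "(g ^^ n) x" "c (w n)" "(g ^^ n) x0"] isometry_funpow_dist[OF g, of n x x0]
      near[of n] by linarith
  ultimately show ?thesis by (rule that)
qed

text \<open>Points of \<open>c\<close> with nonnegative parameter are near the forward half of \<open>P\<close>, which is far
  from the points of \<open>P\<close> with very negative parameter.\<close>
lemma quasi_geodesic_backward_param_negative:
  fixes c :: "real \<Rightarrow> 'a::metric_space"
  assumes q: "quasi_geodesic_on UNIV lam eps P"
    and fh: "\<And>z. z \<in> c ` {0..} \<Longrightarrow> infdist z (P ` {0..}) \<le> C'"
    and near: "dist (P s) (c w) \<le> C" and s: "s \<le> 0"
    and far: "eps + C + (C' + 1) < \<bar>s\<bar> / lam"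
  shows "w < 0"
proof (rule ccontr)
  assume "\<not> w < 0"
  then have "infdist (c w) (P ` {0..}) \<le> C'" by (intro fh imageI) simp
  then obtain t where t: "0 \<le> t" "dist (c w) (P t) \<le> C' + 1"
    by (rule infdist_le_nearE[rotated]) auto
  have "0 < lam" using q by (simp add: quasi_geodesic_on_def)
  moreover have "\<bar>s\<bar> \<le> \<bar>s - t\<bar>" using s t(1) by linarith
  ultimately have "\<bar>s\<bar> / lam \<le> \<bar>s - t\<bar> / lam" by (simp add: divide_right_mono)
  moreover have "\<bar>s - t\<bar> / lam - eps \<le> dist (P s) (P t)" by (rule quasi_geodesic_onD(1)[OF q]) auto
  moreover have "dist (P s) (P t) \<le> C + (C' + 1)"
    using dist_triangle[of "P s" "P t" "c w"] near t(2) by simp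
  ultimately show False using far by linarith
qed

lemma pole_data_backward_tracking:
  assumes g: "isometry g" and pd: "pole_data g c"
  obtains D w where "filterlim w at_top sequentially" and "\<And>n. dist ((inv g ^^ n) x) (c (- w n)) \<le> D"
proof -
  obtain x0 P L lam eps where c: "biinf_geodesic c" and q: "quasi_geodesic_on UNIV lam eps P"
    and L: "0 < L" and orbit: "\<And>n. P (- (L * real n)) = (inv g ^^ n) x0"
    and fh_all: "fin_hausdorff (range c) (range P)" and fh: "fin_hausdorff (c ` {0..}) (P ` {0..})"
    using pole_data_orbit_path[OF pd] by metis
  have lam: "0 < lam" using q by (simp add: quasi_geodesic_on_def)
  obtain C1 where C1: "\<And>z. z \<in> range P \<Longrightarrow> infdist z (range c) \<le> C1"
    using fh_all unfolding fin_hausdorff_def by blast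
  obtain C2 where C2: "\<And>z. z \<in> c ` {0..} \<Longrightarrow> infdist z (P ` {0..}) \<le> C2"
    using fh unfolding fin_hausdorff_def by blast
  have "\<exists>w. dist ((inv g ^^ n) x0) (c w) \<le> C1 + 1" for n
  proof -
    have "infdist ((inv g ^^ n) x0) (range c) \<le> C1" using C1[OF rangeI] orbit[of n] by metis
    then show ?thesis by (rule infdist_le_nearE[rotated]) auto
  qed
  then obtain w where near: "\<And>n. dist ((inv g ^^ n) x0) (c (w n)) \<le> C1 + 1" by metis
  have "filterlim (\<lambda>n. L / lam * real n) at_top sequentially"
    using L lam by (intro filterlim_at_top_if_linear_lower_bound[where a = "L / lam" and b = 0]
        always_eventually allI) auto
  then have "\<forall>\<^sub>F n in sequentially. eps + (C1 + 1) + (C2 + 1) < L / lam * real n"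
    unfolding filterlim_at_top_dense by blast
  then have "\<forall>\<^sub>F n in sequentially. L / lam * real n - (eps + (C1 + 1) + dist (P 0) (c 0)) \<le> - w n"
  proof (rule eventually_mono)
    fix n
    assume far: "eps + (C1 + 1) + (C2 + 1) < L / lam * real n"
    have "w n < 0"
      by (rule quasi_geodesic_backward_param_negative[OF q C2, where s = "- (L * real n)"])
        (use near[of n] orbit[of n] L far in \<open>auto simp: abs_mult\<close>)
    then show "L / lam * real n - (eps + (C1 + 1) + dist (P 0) (c 0)) \<le> - w n"
      using quasi_geodesic_param_lower_bound[OF q c, of "- (L * real n)" "w n" "C1 + 1"] near[of n] L
      by (simp add: orbit abs_mult)
  qed
  then have "filterlim (\<lambda>n. - w n) at_top sequentially"
    using L lam by (intro filterlim_at_top_if_linear_lower_bound[where a = "L / lam"]) auto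
  moreover have "dist ((inv g ^^ n) x) (c (- (- w n))) \<le> dist x x0 + (C1 + 1)" for n
    using dist_triangle[of "(inv g ^^ n) x" "c (w n)" "(inv g ^^ n) x0"]
      isometry_funpow_dist[OF isometry_inv[OF g], of n x x0] near[of n] by simp
  ultimately show ?thesis by (rule that)
qed

theorem proposition6p12:
  fixes g :: "'a::metric_space \<Rightarrow> 'a" and gplus gminus :: "(real \<Rightarrow> 'a) set"
  assumes "proper_space TYPE('a)" and "geodesic_space TYPE('a)"
    and "morse_isometry g"
    and "pole_plus g gplus" and "pole_minus g gminus"
  shows "\<forall>x. converges_to_boundary (\<lambda>n. (g ^^ n) x) gplus \<and>
             converges_to_boundary (\<lambda>n. (inv g ^^ n) x) gminus"
proof
  fix x
  have g: "isometry g" using assms(3) by (simp add: morse_isometry_def)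
  obtain c where c: "pole_data g c" and gplus: "gplus = morse_class c"
    using assms(4) by (auto simp: pole_plus_def)
  then obtain M where c_geod: "biinf_geodesic c" and c_morse: "N_morse_on M UNIV c"
    by (auto simp: pole_data_def)
  obtain D w where "filterlim w at_top sequentially" "\<And>n. dist ((g ^^ n) x) (c (w n)) \<le> D"
    using pole_data_forward_tracking[OF g c, where x = x] by blast
  then have plus: "converges_to_boundary (\<lambda>n. (g ^^ n) x) gplus"
    unfolding gplus by (intro converges_to_boundary_if_tracks_geodesic[OF assms(1,2) c_geod c_morse])
  obtain c' where c': "pole_data g c'" and gminus: "gminus = morse_class (\<lambda>t. c' (- t))"
    using assms(5) by (auto simp: pole_minus_def)
  then obtain M' where c'_geod: "biinf_geodesic c'" and c'_morse: "N_morse_on M' UNIV c'"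
    by (auto simp: pole_data_def)
  obtain D' w' where "filterlim w' at_top sequentially" "\<And>n. dist ((inv g ^^ n) x) (c' (- w' n)) \<le> D'"
    using pole_data_backward_tracking[OF g c', where x = x] by blast
  then have "converges_to_boundary (\<lambda>n. (inv g ^^ n) x) gminus"
    unfolding gminus
    by (intro converges_to_boundary_if_tracks_geodesic[OF assms(1,2)
          biinf_geodesic_reflect[OF c'_geod] N_morse_on_reflect[OF c'_morse]])
  with plus show "converges_to_boundary (\<lambda>n. (g ^^ n) x) gplus \<and>
      converges_to_boundary (\<lambda>n. (inv g ^^ n) x) gminus" ..
qed

end
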